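(* For every complex $s$ with $\Re(s)>3$, \[\sum_{k=1}^\infty (-1)^{k-1}k^2\,\zeta(s,k)=\tfrac{1}{2}\Big\{(1-2^{2-s}) \zeta(s-1)+(1-2^{3-s}) \zeta(s-2)\Big\}.\]
   Context: $\zeta(s,\alpha)=\sum_{n=0}^\infty (n+\alpha)^{-s}$ denotes the Hurwitz zeta function ($\Re(s)>1$, $\alpha>0$), and $\zeta(s)=\zeta(s,1)$ is the Riemann zeta function. *)

theory Defs
  imports "HOL-Analysis.Analysis"
begin

text \<open>Hurwitz zeta function, defined by its series (meaningful for Re s > 1, a > 0).\<close>
definition hurwitz_zeta :: "complex \<Rightarrow> real \<Rightarrow> complex" where
  "hurwitz_zeta s a = (\<Sum>n. (complex_of_real (real n + a)) powr (- s))"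

definition riemann_zeta :: "complex \<Rightarrow> complex" where
  "riemann_zeta s = hurwitz_zeta s 1"

end

theory Submission
  imports Defs
begin

text \<open>
  Sum by parts against c(j) = sum over i < j of (-1)^i (i+1)^2 = (-1)^(j+1) j (j+1) / 2.
  The partial sums of the series become
  sum over m < K of c(m+1) (m+1)^(-s), plus c(K) zeta(s, K+1).
  Since c(m+1) (m+1)^(-s) = (-1)^m ((m+1)^(1-s) + (m+1)^(2-s)) / 2, the first sum tends to
  half the sum of two alternating zeta values, and the alternating zeta series at z equals
  (1 - 2^(1-z)) zeta(z). The boundary term is at most (K+1)^2 zeta(Re s, K+1), which is
  bounded by a tail of the convergent series of n^(2 - Re s) because Re s > 3.
\<close>

definition zeta_term :: "complex \<Rightarrow> nat \<Rightarrow> complex" where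
  "zeta_term z m = (of_nat (Suc m) :: complex) powr (- z)"

lemma norm_zeta_term: "norm (zeta_term z m) = real (Suc m) powr (- Re z)"
proof -
  have "norm (zeta_term z m) = Re (of_nat (Suc m)) powr Re (-z)"
    unfolding zeta_term_def by (rule norm_powr_real_powr) auto
  thus ?thesis by simp
qed

lemma summable_real_powr_shift:
  assumes "a < -1"
  shows "summable (\<lambda>m. real (Suc m + k) powr a)"
proof -
  have "summable (\<lambda>n. real n powr a)"
    using assms summable_real_powr_iff by blast
  from summable_ignore_initial_segment[OF this, of "Suc k"]
  show ?thesis by (simp add: add.commute)
qed

lemma summable_norm_zeta_term_shift:
  assumes "Re z > 1"
  shows "summable (\<lambda>m. norm (zeta_term z (m + k)))"
  using summable_real_powr_shift[of "- Re z" k] assms by (simp add: norm_zeta_term)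

lemma summable_zeta_term_shift:
  assumes "Re z > 1"
  shows "summable (\<lambda>m. zeta_term z (m + k))"
  by (rule summable_norm_cancel[OF summable_norm_zeta_term_shift[OF assms]])

lemma hurwitz_zeta_Suc_eq_suminf:
  "hurwitz_zeta s (real (Suc k)) = (\<Sum>n. zeta_term s (n + k))"
proof -
  have "\<And>n. complex_of_real (real n + real (Suc k)) = of_nat (Suc (n + k))"
    by simp
  thus ?thesis unfolding hurwitz_zeta_def zeta_term_def by presburger
qed

lemma riemann_zeta_eq_suminf: "riemann_zeta s = (\<Sum>n. zeta_term s n)"
  using hurwitz_zeta_Suc_eq_suminf[of s 0] by (simp add: riemann_zeta_def)

lemma suminf_zeta_term_shift_split_head:
  assumes "Re s > 1"
  shows "(\<Sum>n. zeta_term s (n + k)) = zeta_term s k + (\<Sum>n. zeta_term s (n + Suc k))"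
  using suminf_split_head[OF summable_zeta_term_shift[OF assms, of k]] by simp

lemma zeta_term_double_Suc: "zeta_term z (n*2+1) = 2 powr (-z) * zeta_term z n"
proof -
  have "(of_nat (Suc (n*2+1)) :: complex) = of_real 2 * of_real (real (Suc n))" by simp
  hence "zeta_term z (n*2+1) = (of_real 2 * of_real (real (Suc n))) powr (-z)"
    unfolding zeta_term_def by metis
  also have "\<dots> = of_real 2 powr (-z) * of_real (real (Suc n)) powr (-z)"
    by (rule powr_times_real) auto
  finally show ?thesis by (simp add: zeta_term_def)
qed

lemma alternating_zeta_sums:
  assumes z: "Re z > 1"
  shows "(\<lambda>m. (-1)^m * zeta_term z m) sums ((1 - 2 powr (1 - z)) * riemann_zeta z)"
proof -
  have summable_zeta: "summable (zeta_term z)"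
    using summable_zeta_term_shift[OF z, of 0] by simp
  have summable_alt: "summable (\<lambda>m. (-1)^m * zeta_term z m)"
    by (rule summable_norm_cancel)
      (use summable_norm_zeta_term_shift[OF z, of 0] in \<open>simp add: norm_mult norm_power\<close>)
  define \<zeta> where "\<zeta> = (\<Sum>n. zeta_term z n)"
  define \<eta> where "\<eta> = (\<Sum>m. (-1)^m * zeta_term z m)"
  define g where "g m = zeta_term z m - (-1)^m * zeta_term z m" for m
  have "g sums (\<zeta> - \<eta>)"
    unfolding g_def \<zeta>_def \<eta>_def by (intro sums_diff summable_sums summable_zeta summable_alt)
  from sums_group[OF this, of 2]
  have pairs_sum_diff: "(\<lambda>n. sum g {n*2..<n*2+2}) sums (\<zeta> - \<eta>)" by simp
  text \<open>\<open>\<zeta> - \<eta>\<close> is twice the sum over the even integers \<open>2(n+1)\<close>.\<close>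
  have pair_eq: "sum g {n*2..<n*2+2} = 2 * 2 powr (-z) * zeta_term z n" for n
  proof -
    have even: "(-1::complex)^(n*2) = 1" by (simp add: mult.commute[of n] power_mult)
    hence odd: "(-1::complex)^(n*2+1) = -1" by simp
    have "sum g {n*2..<n*2+2} = g (n*2) + g (n*2+1)" by (simp add: numeral_2_eq_2)
    also have "\<dots> = 2 * zeta_term z (n*2+1)" unfolding g_def even odd by simp
    finally show ?thesis using zeta_term_double_Suc[of z n] by simp
  qed
  have "(\<lambda>n. sum g {n*2..<n*2+2}) sums (2 * 2 powr (-z) * \<zeta>)"
    unfolding pair_eq \<zeta>_def by (intro sums_mult summable_sums summable_zeta)
  hence "\<zeta> - \<eta> = 2 * 2 powr (-z) * \<zeta>" using sums_unique2[OF pairs_sum_diff] by blast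
  moreover have "(2::complex) powr (1 - z) = 2 * 2 powr (-z)"
    using powr_add[of "2::complex" 1 "-z"] by simp
  ultimately have "\<eta> = (1 - 2 powr (1 - z)) * \<zeta>" by (simp add: algebra_simps)
  with summable_alt show ?thesis
    unfolding \<eta>_def \<zeta>_def riemann_zeta_eq_suminf using summable_sums by metis
qed

definition alt_square_sum :: "nat \<Rightarrow> complex" where
  "alt_square_sum j = (\<Sum>i<j. (-1)^i * (of_nat (Suc i))^2)"

lemma alt_square_sum_closed:
  "alt_square_sum j = (-1)^(Suc j) * of_nat j * of_nat (Suc j) / 2"
proof (induction j)
  case 0
  thus ?case by (simp add: alt_square_sum_def)
next
  case (Suc j)
  have "alt_square_sum (Suc j) = alt_square_sum j + (-1)^j * (of_nat (Suc j))^2"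
    by (simp add: alt_square_sum_def)
  also have "\<dots> = (-1)^(Suc (Suc j)) * of_nat (Suc j) * of_nat (Suc (Suc j)) / 2"
    by (simp only: Suc.IH) (simp add: field_simps power2_eq_square)
  finally show ?case .
qed

lemma norm_alt_square_sum_le: "norm (alt_square_sum K) \<le> real (Suc K) ^ 2"
proof -
  have "norm (alt_square_sum K) = real K * real (Suc K) / 2"
    by (simp add: alt_square_sum_closed norm_mult norm_divide norm_power norm_of_nat
             del: of_nat_Suc)
  also have "\<dots> \<le> real (Suc K) ^ 2"
    by (simp add: power2_eq_square field_simps mult_mono)
  finally show ?thesis .
qed

lemma alt_square_sum_Suc_times_zeta_term:
  "alt_square_sum (Suc m) * zeta_term s m
     = (1/2) * ((-1)^m * zeta_term (s - 1) m + (-1)^m * zeta_term (s - 2) m)"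
proof -
  define w :: complex where "w = of_nat (Suc m)"
  have "w \<noteq> 0" unfolding w_def by (rule of_nat_neq_0)
  have shift1: "zeta_term (s - 1) m = w * zeta_term s m"
    unfolding zeta_term_def w_def[symmetric] using powr_add[of w 1 "-s"] by simp
  have shift2: "zeta_term (s - 2) m = w^2 * zeta_term s m"
  proof -
    have "zeta_term (s - 2) m = w powr (2 + - s)"
      unfolding zeta_term_def w_def[symmetric] by simp
    also have "\<dots> = w powr 2 * w powr (-s)" by (rule powr_add)
    finally show ?thesis using \<open>w \<noteq> 0\<close> by (simp add: zeta_term_def w_def del: of_nat_Suc)
  qed
  have coeff: "alt_square_sum (Suc m) = (-1)^m * (w + w^2) / 2"
    by (simp add: alt_square_sum_closed w_def field_simps power2_eq_square)
  show ?thesis unfolding shift1 shift2 coeff by (simp add: algebra_simps)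
qed

lemma partial_sums_by_parts:
  assumes "Re s > 1"
  shows "(\<Sum>k<K. (-1)^k * (of_nat (Suc k))^2 * hurwitz_zeta s (real (Suc k)))
      = (\<Sum>m<K. alt_square_sum (Suc m) * zeta_term s m)
        + alt_square_sum K * hurwitz_zeta s (real (Suc K))"
  unfolding hurwitz_zeta_Suc_eq_suminf
proof (induction K)
  case 0
  thus ?case by (simp add: alt_square_sum_def)
next
  case (Suc K)
  have "alt_square_sum (Suc K) = alt_square_sum K + (-1)^K * (of_nat (Suc K))^2"
    by (simp add: alt_square_sum_def)
  thus ?case
    using Suc suminf_zeta_term_shift_split_head[OF assms, of K]
    by (simp add: algebra_simps)
qed

lemma square_times_powr_le:
  fixes x y a :: real
  assumes "0 < y" "y \<le> x"
  shows "y^2 * x powr (-a) \<le> x powr (2 - a)"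
proof -
  have "x > 0" using assms by linarith
  have "x powr (2 - a) = x powr 2 * x powr (-a)" using powr_add[of x 2 "-a"] by simp
  also have "x powr 2 = x^2" using \<open>x > 0\<close> by (simp add: powr_numeral)
  finally have split: "x powr (2 - a) = x^2 * x powr (-a)" .
  have "y^2 \<le> x^2" using assms by (intro power_mono) auto
  thus ?thesis unfolding split by (intro mult_right_mono) auto
qed

lemma norm_boundary_term_le:
  assumes "Re s > 3"
  shows "norm (alt_square_sum K * hurwitz_zeta s (real (Suc K)))
           \<le> (\<Sum>n. real (Suc (n + K)) powr (2 - Re s))"
proof -
  have summable_norms: "summable (\<lambda>n. norm (zeta_term s (n + K)))"
    using assms by (intro summable_norm_zeta_term_shift) auto
  have "norm (hurwitz_zeta s (real (Suc K))) \<le> (\<Sum>n. norm (zeta_term s (n + K)))"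
    unfolding hurwitz_zeta_Suc_eq_suminf by (rule summable_norm[OF summable_norms])
  hence "norm (alt_square_sum K * hurwitz_zeta s (real (Suc K)))
           \<le> real (Suc K)^2 * (\<Sum>n. norm (zeta_term s (n + K)))"
    unfolding norm_mult by (intro mult_mono norm_alt_square_sum_le) auto
  also have "\<dots> = (\<Sum>n. real (Suc K)^2 * norm (zeta_term s (n + K)))"
    by (rule suminf_mult[OF summable_norms, symmetric])
  also have "\<dots> \<le> (\<Sum>n. real (Suc (n + K)) powr (2 - Re s))"
  proof (rule suminf_le)
    show "summable (\<lambda>n. real (Suc (n + K)) powr (2 - Re s))"
      using summable_real_powr_shift[of "2 - Re s" K] assms by simp
    show "real (Suc K)^2 * norm (zeta_term s (n + K)) \<le> real (Suc (n + K)) powr (2 - Re s)"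
      for n unfolding norm_zeta_term by (rule square_times_powr_le) auto
  qed (use summable_norms in \<open>auto intro: summable_mult\<close>)
  finally show ?thesis .
qed

lemma boundary_term_tendsto_0:
  assumes "Re s > 3"
  shows "(\<lambda>K. alt_square_sum K * hurwitz_zeta s (real (Suc K))) \<longlonglongrightarrow> 0"
proof (rule Lim_null_comparison)
  have "summable (\<lambda>n. real (Suc n) powr (2 - Re s))"
    using summable_real_powr_shift[of "2 - Re s" 0] assms by simp
  from suminf_exist_split2[OF this]
  show "(\<lambda>K. \<Sum>n. real (Suc (n + K)) powr (2 - Re s)) \<longlonglongrightarrow> 0" by simp
qed (use norm_boundary_term_le[OF assms] in auto)

theorem mainTheorem9:
  fixes s :: complex
  assumes "Re s > 3"
  shows "(\<lambda>k. (-1) ^ k * (of_nat (Suc k))^2 * hurwitz_zeta s (real (Suc k))) sums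
           ((1/2) * ((1 - 2 powr (2 - s)) * riemann_zeta (s - 1)
                   + (1 - 2 powr (3 - s)) * riemann_zeta (s - 2)))"
proof -
  have eta1: "(\<lambda>m. (-1)^m * zeta_term (s - 1) m)
                sums ((1 - 2 powr (2 - s)) * riemann_zeta (s - 1))"
    using alternating_zeta_sums[of "s - 1"] assms by (simp add: algebra_simps)
  have eta2: "(\<lambda>m. (-1)^m * zeta_term (s - 2) m)
                sums ((1 - 2 powr (3 - s)) * riemann_zeta (s - 2))"
    using alternating_zeta_sums[of "s - 2"] assms by (simp add: algebra_simps)
  have "(\<lambda>m. alt_square_sum (Suc m) * zeta_term s m)
          sums ((1/2) * ((1 - 2 powr (2 - s)) * riemann_zeta (s - 1)
                       + (1 - 2 powr (3 - s)) * riemann_zeta (s - 2)))"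
    unfolding alt_square_sum_Suc_times_zeta_term by (intro sums_mult sums_add eta1 eta2)
  hence "(\<lambda>K. (\<Sum>m<K. alt_square_sum (Suc m) * zeta_term s m)
              + alt_square_sum K * hurwitz_zeta s (real (Suc K)))
          \<longlonglongrightarrow> (1/2) * ((1 - 2 powr (2 - s)) * riemann_zeta (s - 1)
                       + (1 - 2 powr (3 - s)) * riemann_zeta (s - 2)) + 0"
    unfolding sums_def by (intro tendsto_add boundary_term_tendsto_0 assms)
  with partial_sums_by_parts[of s] assms show ?thesis
    unfolding sums_def by simp
qed

end
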